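(* Let $\sigma,b$ and $x_0$ be as in the context. For $\delta>0$ and $\phi\in L^2[0,\delta]$ let $x_t(\phi)$ solve $x_t(\phi)=x_0+\int_0^t\sigma(x_s(\phi))\phi_sds+\int_0^tb(x_s(\phi))ds$, $t\in[0,\delta]$, and put $\varepsilon=(\int_0^\delta|\phi_s|^2ds)^{1/2}$. There exist $\delta_*,\varepsilon_*\in1/\mathcal{C}$ and $C\in\mathcal{C}$ such that, whenever $\delta\le\delta_*$ and $\varepsilon\le\varepsilon_*$, \[ \left|x_\delta(\phi)-(x_0+b(x_0)\delta)\right|_{\bar A_\delta(x_0)}\le C(\varepsilon\vee\delta^{1/2}). \]
   Context: $\sigma,b:\mathbb{R}^2\to\mathbb{R}^2$ are $C^3$; $\partial_gf=\sum_ig^i\partial_{x_i}f$, $[f,g]=\partial_gf-\partial_fg$. $\bar A_\delta(x_0)$ is the matrix with columns $\delta^{1/2}(\sigma(x_0)+\delta\partial_b\sigma(x_0))$, $\delta^{3/2}[b,\sigma](x_0)$, and $|\xi|_{\bar A_\delta(x_0)}=|\bar A_\delta(x_0)^{-1}\xi|$. $\lambda(z)$ is the smallest eigenvalue of $A(z)A(z)^T$ with $A(z)$ having columns $\sigma(z),[b,\sigma](z)$; $n(z)=\sum_{k=0}^3\sum_{|\alpha|=k}(|\partial^\alpha b(z)|+|\partial^\alpha\sigma(z)|)$. Local hypotheses: $\lambda(z)\ge\Lambda\in(0,1]$, $n(z)\le N$ ($N\ge1$) for $|z-x_0|<1$; there is a differentiable $\kappa_\sigma$ with $\partial_\sigma\sigma=\kappa_\sigma\sigma$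 and $|\kappa_\sigma|,|\nabla\kappa_\sigma|\le n$. $\mathcal{C}=\{K(N/\Lambda)^q:K,q\ge1\text{ universal}\}$, $1/\mathcal{C}=\{c:1/c\in\mathcal{C}\}$. *)

theory Defs
  imports "HOL-Analysis.Analysis"
begin

definition pd :: "2 \<Rightarrow> (real^2 \<Rightarrow> 'b::real_normed_vector) \<Rightarrow> real^2 \<Rightarrow> 'b" where
  "pd i f x = frechet_derivative f (at x) (axis i 1)"

fun Ck :: "nat \<Rightarrow> (real^2 \<Rightarrow> 'b::real_normed_vector) \<Rightarrow> bool" where
  "Ck 0 f = continuous_on UNIV f"
| "Ck (Suc k) f = ((\<forall>x. f differentiable (at x)) \<and> (\<forall>i. Ck k (pd i f)))"

definition dpart :: "nat \<Rightarrow> nat \<Rightarrow> (real^2 \<Rightarrow> real^2) \<Rightarrow> real^2 \<Rightarrow> real^2" where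
  "dpart a1 a2 f = ((pd 1) ^^ a1) (((pd 2) ^^ a2) f)"

definition nfun :: "(real^2 \<Rightarrow> real^2) \<Rightarrow> (real^2 \<Rightarrow> real^2) \<Rightarrow> real^2 \<Rightarrow> real" where
  "nfun b \<sigma> z = (\<Sum>k\<le>3. \<Sum>a\<le>k. norm (dpart a (k - a) b z) + norm (dpart a (k - a) \<sigma> z))"

definition dirD :: "(real^2 \<Rightarrow> real^2) \<Rightarrow> (real^2 \<Rightarrow> real^2) \<Rightarrow> real^2 \<Rightarrow> real^2" where
  "dirD f g x = (\<Sum>i\<in>UNIV. g x $ i *\<^sub>R pd i f x)"

definition bracket :: "(real^2 \<Rightarrow> real^2) \<Rightarrow> (real^2 \<Rightarrow> real^2) \<Rightarrow> real^2 \<Rightarrow> real^2" where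
  "bracket f g x = dirD f g x - dirD g f x"

definition grad :: "(real^2 \<Rightarrow> real) \<Rightarrow> real^2 \<Rightarrow> real^2" where
  "grad k z = (\<chi> i. pd i k z)"

definition cols :: "real^2 \<Rightarrow> real^2 \<Rightarrow> real^2^2" where
  "cols c1 c2 = (\<chi> i. \<chi> j. if j = 1 then c1 $ i else c2 $ i)"

definition Amat :: "(real^2 \<Rightarrow> real^2) \<Rightarrow> (real^2 \<Rightarrow> real^2) \<Rightarrow> real^2 \<Rightarrow> real^2^2" where
  "Amat \<sigma> b z = cols (\<sigma> z) (bracket b \<sigma> z)"

definition lambda_min :: "real^2^2 \<Rightarrow> real" where
  "lambda_min M = Min {l. \<exists>v. v \<noteq> 0 \<and> M *v v = l *\<^sub>R v}"

definition lam :: "(real^2 \<Rightarrow> real^2) \<Rightarrow> (real^2 \<Rightarrow> real^2) \<Rightarrow> real^2 \<Rightarrow> real" where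
  "lam \<sigma> b z = lambda_min (Amat \<sigma> b z ** transpose (Amat \<sigma> b z))"

definition Abar :: "(real^2 \<Rightarrow> real^2) \<Rightarrow> (real^2 \<Rightarrow> real^2) \<Rightarrow> real \<Rightarrow> real^2 \<Rightarrow> real^2^2" where
  "Abar \<sigma> b \<delta> x0 = cols (sqrt \<delta> *\<^sub>R (\<sigma> x0 + \<delta> *\<^sub>R dirD \<sigma> b x0))
                          ((\<delta> powr (3/2)) *\<^sub>R bracket b \<sigma> x0)"

definition Anorm :: "real^2 \<Rightarrow> real^2^2 \<Rightarrow> real" where
  "Anorm \<xi> M = norm (matrix_inv M *v \<xi>)"

end

theory Submission
  imports Defs
begin

text \<open>
  Put \<open>\<beta> = [b,\<sigma>](x\<^sub>0)\<close>, \<open>\<nu> = \<sigma>(x\<^sub>0) + \<delta> \<partial>\<^sub>b\<sigma>(x\<^sub>0)\<close> and \<open>w = x\<^sub>\<delta> - x\<^sub>0 - \<delta> b(x\<^sub>0)\<close>.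
  The columns of \<open>Abar \<sigma> b \<delta> x\<^sub>0\<close> are \<open>\<delta>\<^sup>1\<^sup>/\<^sup>2 \<nu>\<close> and \<open>\<delta>\<^sup>3\<^sup>/\<^sup>2 \<beta>\<close>, so by Cramer's rule the
  \<open>Anorm\<close> of \<open>w\<close> is at most \<open>(\<delta>\<^sup>-\<^sup>1\<^sup>/\<^sup>2 |det(w,\<beta>)| + \<delta>\<^sup>-\<^sup>3\<^sup>/\<^sup>2 |det(\<nu>,w)|) / |det(\<nu>,\<beta>)|\<close>,
  and \<open>|det(\<nu>,\<beta>)| \<ge> \<Lambda>/2\<close> since \<open>|det A(x\<^sub>0)| \<ge> \<Lambda>\<close> and \<open>\<delta>\<close> is small.
  A continuity argument keeps the path within distance \<open>O(N \<delta>\<^sup>1\<^sup>/\<^sup>2 (\<epsilon> \<or> \<delta>\<^sup>1\<^sup>/\<^sup>2))\<close> of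
  \<open>x\<^sub>0\<close>, which bounds \<open>|w|\<close> and hence the first term. The second term needs an extra
  factor \<open>\<delta>\<close>: the control enters \<open>det(\<nu>,w)\<close> only through \<open>det(\<nu>, \<sigma>(x\<^sub>s))\<close>, which
  is \<open>O(\<delta>)\<close> because \<open>\<partial>\<^sub>\<sigma>\<sigma> = \<kappa>\<sigma>\<close> is parallel to \<open>\<sigma>\<close>: moving along \<open>\<sigma>\<close> does not turn \<open>\<sigma>\<close>.
\<close>

section \<open>Determinants and eigenvalues in the plane\<close>

definition det2 :: "real^2 \<Rightarrow> real^2 \<Rightarrow> real" where
  "det2 u v = u$1 * v$2 - v$1 * u$2"

lemma det_cols: "det (cols u v) = det2 u v"
  by (simp add: det_2 cols_def det2_def)

lemma det2_simps:
  "det2 u (v + w) = det2 u v + det2 u w"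
  "det2 u (v - w) = det2 u v - det2 u w"
  "det2 u (r *\<^sub>R v) = r * det2 u v"
  "det2 (u + w) v = det2 u v + det2 w v"
  "det2 (r *\<^sub>R u) v = r * det2 u v"
  "det2 u u = 0"
  by (simp_all add: det2_def algebra_simps)

lemma abs_det2_le: "\<bar>det2 u v\<bar> \<le> norm u * norm v"
proof -
  define u' :: "real^2" where "u' = vector [- u$2, u$1]"
  have "det2 u v = inner u' v" "norm u' = norm u"
    by (simp_all add: u'_def det2_def inner_vec_def norm_eq_sqrt_inner sum_2 algebra_simps)
  then show ?thesis
    using Cauchy_Schwarz_ineq2[of u' v] by simp
qed

lemma bounded_linear_det2: "bounded_linear (det2 u)"
proof (rule bounded_linear_intro[where K = "norm u"])
  show "norm (det2 u v) \<le> norm v * norm u" for v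
    using abs_det2_le[of u v] by (simp add: mult.commute)
qed (simp_all add: det2_simps)

lemma matrix_vector_mult_2: "((M::real^2^2) *v v) $ i = M$i$1 * v$1 + M$i$2 * v$2"
  by (simp add: matrix_vector_mult_def sum_2)

lemma cols_mult_cramer:
  assumes "det2 u v \<noteq> 0"
  shows "cols u v *v vector [det2 w v / det2 u v, det2 u w / det2 u v] = w"
proof -
  have "u$i * det2 w v + v$i * det2 u w = w$i * det2 u v" if "i = 1 \<or> i = 2" for i
    using that by (auto simp: det2_def algebra_simps)
  then show ?thesis
    using assms unfolding vec_eq_iff forall_2
    by (simp add: matrix_vector_mult_2 cols_def add_divide_distrib[symmetric])
qed

lemma matrix_inv_mult_vector:
  fixes A :: "'a::field^'n^'n"
  assumes "invertible A" "A *v c = w"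
  shows "matrix_inv A *v w = c"
proof -
  have "matrix_inv A ** A = mat 1"
    using someI_ex[OF assms(1)[unfolded invertible_def]] unfolding matrix_inv_def by blast
  then show ?thesis
    using assms(2) by (metis matrix_vector_mul_assoc matrix_vector_mul_lid)
qed

lemma invertible_cols: "det2 u v \<noteq> 0 \<Longrightarrow> invertible (cols u v)"
  by (simp add: invertible_det_nz det_cols)

lemma Anorm_cols_le:
  assumes "det2 u v \<noteq> 0"
  shows "Anorm w (cols u v) \<le> (\<bar>det2 w v\<bar> + \<bar>det2 u w\<bar>) / \<bar>det2 u v\<bar>"
proof -
  define c :: "real^2" where "c = vector [det2 w v / det2 u v, det2 u w / det2 u v]"
  have "matrix_inv (cols u v) *v w = c"
    using matrix_inv_mult_vector[OF invertible_cols[OF assms] cols_mult_cramer[OF assms]]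
    by (simp add: c_def)
  then show ?thesis
    unfolding Anorm_def using norm_le_l1_cart[of c]
    by (simp add: c_def sum_2 add_divide_distrib)
qed

lemma sym2_eigenvalue_iff:
  fixes M :: "real^2^2"
  assumes sym: "M$2$1 = M$1$2"
  shows "(\<exists>v. v \<noteq> 0 \<and> M *v v = l *\<^sub>R v) \<longleftrightarrow> (M$1$1 - l) * (M$2$2 - l) = (M$1$2)\<^sup>2"
    (is "?eig \<longleftrightarrow> (?p - l) * (?s - l) = ?r\<^sup>2")
proof
  assume ?eig
  then obtain v where v: "v \<noteq> 0" "M *v v = l *\<^sub>R v" by blast
  have e1: "(?p - l) * v$1 = - ?r * v$2" and e2: "(?s - l) * v$2 = - ?r * v$1"
    using arg_cong[OF v(2), of "\<lambda>u. u$1"] arg_cong[OF v(2), of "\<lambda>u. u$2"]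
    by (simp_all add: matrix_vector_mult_2 sym algebra_simps)
  have "((?p - l) * (?s - l) - ?r\<^sup>2) * v$1 = 0" "((?p - l) * (?s - l) - ?r\<^sup>2) * v$2 = 0"
    using e1 e2 by algebra+
  moreover have "v$1 \<noteq> 0 \<or> v$2 \<noteq> 0"
    using v(1) by (metis exhaust_2 vec_eq_iff zero_index)
  ultimately show "(?p - l) * (?s - l) = ?r\<^sup>2" by auto
next
  assume root: "(?p - l) * (?s - l) = ?r\<^sup>2"
  consider "?r \<noteq> 0" | "?r = 0" "l = ?p" | "?r = 0" "l = ?s"
    using root by fastforce
  then show ?eig
  proof cases
    case 1
    have "vector [?r, l - ?p] \<noteq> (0::real^2)" using 1 by (metis vector_2(1) zero_index)
    moreover have "M *v vector [?r, l - ?p] = l *\<^sub>R vector [?r, l - ?p]"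
      using root unfolding vec_eq_iff forall_2
      by (simp add: matrix_vector_mult_2 sym power2_eq_square algebra_simps)
    ultimately show ?thesis by blast
  next
    case 2
    have "vector [1, 0] \<noteq> (0::real^2)" by (metis vector_2(1) zero_index zero_neq_one)
    moreover have "M *v vector [1, 0] = l *\<^sub>R vector [1, 0]"
      using 2 unfolding vec_eq_iff forall_2 by (simp add: matrix_vector_mult_2 sym)
    ultimately show ?thesis by blast
  next
    case 3
    have "vector [0, 1] \<noteq> (0::real^2)" by (metis vector_2(2) zero_index zero_neq_one)
    moreover have "M *v vector [0, 1] = l *\<^sub>R vector [0, 1]"
      using 3 unfolding vec_eq_iff forall_2 by (simp add: matrix_vector_mult_2 sym)
    ultimately show ?thesis by blast
  qed
qed

lemma lambda_min_sym2:
  fixes M :: "real^2^2"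
  assumes sym: "M$2$1 = M$1$2"
  defines "disc \<equiv> (M$1$1 - M$2$2)\<^sup>2 + 4 * (M$1$2)\<^sup>2"
  shows "lambda_min M = (M$1$1 + M$2$2 - sqrt disc) / 2"
proof -
  define l1 where "l1 = (M$1$1 + M$2$2 - sqrt disc) / 2"
  define l2 where "l2 = (M$1$1 + M$2$2 + sqrt disc) / 2"
  have "disc \<ge> 0" unfolding disc_def by simp
  have "(2 * l - (M$1$1 + M$2$2))\<^sup>2 - disc = 4 * ((M$1$1 - l) * (M$2$2 - l) - (M$1$2)\<^sup>2)" for l
    unfolding disc_def by (simp add: power2_eq_square algebra_simps)
  then have "(M$1$1 - l) * (M$2$2 - l) = (M$1$2)\<^sup>2 \<longleftrightarrow> (2 * l - (M$1$1 + M$2$2))\<^sup>2 = disc" for l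
    by (metis eq_iff_diff_eq_0 mult_eq_0_iff zero_neq_numeral)
  also have "\<dots> l \<longleftrightarrow> 2 * l - (M$1$1 + M$2$2) = sqrt disc \<or> 2 * l - (M$1$1 + M$2$2) = - sqrt disc"
    for l using real_sqrt_pow2[OF \<open>disc \<ge> 0\<close>] power2_eq_iff by metis
  also have "\<dots> l \<longleftrightarrow> l = l1 \<or> l = l2" for l
    unfolding l1_def l2_def by auto
  finally have "{l. \<exists>v. v \<noteq> 0 \<and> M *v v = l *\<^sub>R v} = {l1, l2}"
    unfolding sym2_eigenvalue_iff[OF sym] by blast
  moreover have "l1 \<le> l2" unfolding l1_def l2_def using \<open>disc \<ge> 0\<close> by simp
  ultimately show ?thesis
    unfolding lambda_min_def l1_def[symmetric] by (simp add: min_def)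
qed

lemma lambda_min_le_abs_det:
  fixes A :: "real^2^2"
  assumes "0 < \<Lambda>" "\<Lambda> \<le> lambda_min (A ** transpose A)"
  shows "\<Lambda> \<le> \<bar>det A\<bar>"
proof -
  define M where "M = A ** transpose A"
  have sym: "M$2$1 = M$1$2"
    unfolding M_def by (simp add: matrix_matrix_mult_def transpose_def sum_2 mult.commute)
  define disc where "disc = (M$1$1 - M$2$2)\<^sup>2 + 4 * (M$1$2)\<^sup>2"
  define l1 where "l1 = (M$1$1 + M$2$2 - sqrt disc) / 2"
  define l2 where "l2 = (M$1$1 + M$2$2 + sqrt disc) / 2"
  have disc_nonneg: "disc \<ge> 0" unfolding disc_def by simp
  then have "l1 * l2 = det M"
    unfolding l1_def l2_def disc_def using sym
    by (simp add: det_2 field_simps power2_eq_square)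
  also have "\<dots> = \<bar>det A\<bar> * \<bar>det A\<bar>"
    unfolding M_def by (simp add: det_mul)
  finally have l12: "l1 * l2 = \<bar>det A\<bar> * \<bar>det A\<bar>" .
  have "\<Lambda> \<le> l1"
    using assms(2) lambda_min_sym2[OF sym] disc_nonneg unfolding M_def[symmetric]
    by (simp add: l1_def disc_def)
  moreover have "l1 \<le> l2" unfolding l1_def l2_def using disc_nonneg by simp
  ultimately have "\<Lambda> * \<Lambda> \<le> \<bar>det A\<bar> * \<bar>det A\<bar>"
    using l12 assms(1) by (metis mult_mono less_imp_le order_trans)
  then show ?thesis
    using assms(1) by (metis abs_ge_zero mult_strict_mono' not_le)
qed

section \<open>Calculus and integration\<close>

lemma abs_mult_add_le: "\<bar>p * (q + r) + u\<bar> \<le> \<bar>p\<bar> * (\<bar>q\<bar> + \<bar>r\<bar>) + \<bar>u::real\<bar>"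
proof -
  have "\<bar>p * (q + r) + u\<bar> \<le> \<bar>p\<bar> * \<bar>q + r\<bar> + \<bar>u\<bar>"
    using abs_triangle_ineq[of "p * (q + r)" u] by (simp add: abs_mult)
  also have "\<dots> \<le> \<bar>p\<bar> * (\<bar>q\<bar> + \<bar>r\<bar>) + \<bar>u\<bar>"
    by (simp add: abs_triangle_ineq mult_left_mono)
  finally show ?thesis .
qed

lemma Ck3_differentiable: "Ck 3 f \<Longrightarrow> f differentiable (at x)"
  by (simp add: numeral_3_eq_3)

lemma frechet_derivative_eq_sum_pd:
  fixes f :: "real^2 \<Rightarrow> real^2"
  assumes "f differentiable (at z)"
  shows "frechet_derivative f (at z) w = (\<Sum>i\<in>UNIV. w$i *\<^sub>R pd i f z)"
proof -
  interpret L: bounded_linear "frechet_derivative f (at z)"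
    using assms frechet_derivative_works has_derivative_bounded_linear by blast
  have "frechet_derivative f (at z) w = frechet_derivative f (at z) (\<Sum>i\<in>UNIV. w$i *\<^sub>R axis i 1)"
    using basis_expansion[of w] by (simp add: scalar_mult_eq_scaleR)
  also have "\<dots> = (\<Sum>i\<in>UNIV. w$i *\<^sub>R pd i f z)"
    by (simp add: L.sum L.scaleR pd_def)
  finally show ?thesis .
qed

lemma dirD_eq_frechet_derivative:
  "f differentiable (at z) \<Longrightarrow> dirD f g z = frechet_derivative f (at z) (g z)"
  by (simp add: frechet_derivative_eq_sum_pd dirD_def)

lemma norm_frechet_derivative_le_pd:
  fixes f :: "real^2 \<Rightarrow> real^2"
  assumes "f differentiable (at z)"
  shows "norm (frechet_derivative f (at z) w) \<le> (norm (pd 1 f z) + norm (pd 2 f z)) * norm w"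
proof -
  have "norm (frechet_derivative f (at z) w) = norm (w$1 *\<^sub>R pd 1 f z + w$2 *\<^sub>R pd 2 f z)"
    using frechet_derivative_eq_sum_pd[OF assms] by (simp add: sum_2)
  also have "\<dots> \<le> \<bar>w$1\<bar> * norm (pd 1 f z) + \<bar>w$2\<bar> * norm (pd 2 f z)"
    by (metis norm_scaleR norm_triangle_ineq)
  also have "\<dots> \<le> norm w * norm (pd 1 f z) + norm w * norm (pd 2 f z)"
    by (intro add_mono mult_right_mono component_le_norm_cart) auto
  finally show ?thesis by (simp add: algebra_simps)
qed

lemma norm_pd_le_nfun:
  "norm (b z) + norm (\<sigma> z) + norm (pd 1 b z) + norm (pd 1 \<sigma> z) + norm (pd 2 b z) + norm (pd 2 \<sigma> z)
    \<le> nfun b \<sigma> z"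
proof -
  have sum3: "(\<Sum>k\<le>(3::nat). F k) = F 0 + F 1 + F 2 + F 3" for F :: "nat \<Rightarrow> real"
    by (simp add: numeral_3_eq_3 numeral_2_eq_2 atMost_Suc)
  have sum1: "(\<Sum>a\<le>(1::nat). F a) = F 0 + F 1" for F :: "nat \<Rightarrow> real"
    by (simp add: atMost_Suc)
  have "0 \<le> (\<Sum>a\<le>k. norm (dpart a (k - a) b z) + norm (dpart a (k - a) \<sigma> z))" for k
    by (intro sum_nonneg) auto
  then show ?thesis
    unfolding nfun_def sum3 sum1 by (simp add: dpart_def add_increasing2)
qed

lemma lipschitz_on_convex:
  fixes f :: "'a::{real_normed_vector,perfect_space} \<Rightarrow> 'b::real_normed_vector"
  assumes "convex S" and "\<And>z. z \<in> S \<Longrightarrow> f differentiable (at z)"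
    and "\<And>z w. z \<in> S \<Longrightarrow> norm (frechet_derivative f (at z) w) \<le> L * norm w"
    and "y \<in> S" "z \<in> S"
  shows "norm (f y - f z) \<le> L * norm (y - z)"
proof (rule differentiable_bound[of S f "\<lambda>z. frechet_derivative f (at z)"])
  show "(f has_derivative frechet_derivative f (at x)) (at x within S)" if "x \<in> S" for x
    using assms(2)[OF that] frechet_derivative_works has_derivative_at_withinI by blast
  show "onorm (frechet_derivative f (at x)) \<le> L" if "x \<in> S" for x
    using assms(3)[OF that] by (intro onorm_le) auto
qed (use assms in auto)

lemma mean_value_linear_functional:
  fixes f :: "'a::real_normed_vector \<Rightarrow> 'b::real_normed_vector" and L :: "'b \<Rightarrow> real"
  assumes "bounded_linear L" and "\<And>z. f differentiable (at z)"
  shows "\<exists>\<theta>\<in>{0<..<1}. L (f (x + v)) - L (f x) = L (frechet_derivative f (at (x + \<theta> *\<^sub>R v)) v)"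
proof -
  let ?q = "\<lambda>\<theta>::real. L (f (x + \<theta> *\<^sub>R v))"
  let ?q' = "\<lambda>\<theta> h. L (frechet_derivative f (at (x + \<theta> *\<^sub>R v)) (h *\<^sub>R v))"
  have "(?q has_derivative ?q' \<theta>) (at \<theta>)" for \<theta>
  proof -
    have "((\<lambda>\<theta>. x + \<theta> *\<^sub>R v) has_derivative (\<lambda>h. h *\<^sub>R v)) (at \<theta>)"
      by (auto intro!: derivative_eq_intros)
    moreover have "(f has_derivative frechet_derivative f (at (x + \<theta> *\<^sub>R v))) (at (x + \<theta> *\<^sub>R v))"
      using assms(2) frechet_derivative_works by blast
    ultimately show ?thesis
      using bounded_linear.has_derivative[OF assms(1) diff_chain_at] by (simp add: o_def)
  qed
  then obtain \<theta> where "\<theta> \<in> {0<..<1}" "?q 1 - ?q 0 = ?q' \<theta> (1 - 0)"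
    using mvt_simple[of 0 1 ?q ?q'] has_derivative_at_withinI by force
  then show ?thesis by auto
qed

lemma norm_linear_integral_le:
  fixes f :: "real \<Rightarrow> 'a::euclidean_space" and L :: "'a \<Rightarrow> 'b::euclidean_space"
  assumes "(f has_integral y) {a..b}" and "bounded_linear L" and "a \<le> b" and "0 \<le> A"
    and "\<And>s. s \<in> {a..b} \<Longrightarrow> norm (L (f s)) \<le> A * \<bar>\<phi> s\<bar> + B"
    and "(\<lambda>s. \<bar>\<phi> s\<bar>) integrable_on {a..b}" and "integral {a..b} (\<lambda>s. \<bar>\<phi> s\<bar>) \<le> I"
  shows "norm (L y) \<le> A * I + B * (b - a)"
proof -
  have Lf: "((L \<circ> f) has_integral L y) {a..b}"
    by (rule has_integral_linear[OF assms(1,2)])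
  have bound: "((\<lambda>s. A * \<bar>\<phi> s\<bar> + B) has_integral (A * integral {a..b} (\<lambda>s. \<bar>\<phi> s\<bar>) + B * (b - a))) {a..b}"
    using has_integral_add[OF has_integral_mult_right[OF integrable_integral[OF assms(6)]]
        has_integral_const_real[of B a b]] assms(3)
    by (simp add: mult.commute)
  have "norm (L y) = norm (integral {a..b} (L \<circ> f))"
    using Lf by (simp add: integral_unique)
  also have "\<dots> \<le> integral {a..b} (\<lambda>s. A * \<bar>\<phi> s\<bar> + B)"
    using Lf bound assms(5) by (intro integral_norm_bound_integral) (auto simp: has_integral_integrable)
  also have "\<dots> = A * integral {a..b} (\<lambda>s. \<bar>\<phi> s\<bar>) + B * (b - a)"
    using bound by (rule integral_unique)
  also have "\<dots> \<le> A * I + B * (b - a)"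
    using assms(4,7) by (simp add: mult_left_mono)
  finally show ?thesis .
qed

lemma square_integrable_imp_absolutely_integrable:
  fixes \<phi> :: "real \<Rightarrow> real"
  assumes "set_borel_measurable lborel {a..b} \<phi>" "(\<lambda>s. (\<phi> s)\<^sup>2) integrable_on {a..b}"
  shows "\<phi> absolutely_integrable_on {a..b}"
proof -
  have "(\<lambda>x. indicator {a..b} x *\<^sub>R \<phi> x) \<in> borel_measurable lebesgue"
    using assms(1) unfolding set_borel_measurable_def by (rule measurable_completion)
  moreover have "(\<lambda>x. if x \<in> {a..b} then \<phi> x else 0) = (\<lambda>x. indicator {a..b} x *\<^sub>R \<phi> x)"
    by (auto simp: indicator_def)
  ultimately have "\<phi> \<in> borel_measurable (lebesgue_on {a..b})"
    by (intro borel_measurable_if_D) simp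
  then show ?thesis
  proof (rule measurable_bounded_by_integrable_imp_absolutely_integrable)
    show "(\<lambda>s. 1/2 + (\<phi> s)\<^sup>2 / 2) integrable_on {a..b}"
      using assms(2) by (intro integrable_add integrable_divide) auto
    show "norm (\<phi> s) \<le> 1/2 + (\<phi> s)\<^sup>2 / 2" for s
      using sum_squares_bound[of "\<bar>\<phi> s\<bar>" 1] by (simp add: power2_eq_square)
  qed auto
qed

lemma le_sqrt_mult_of_AM_GM_bounds:
  fixes A D I :: real
  assumes "0 \<le> D" "0 \<le> I" and AM_GM: "\<And>c. 0 < c \<Longrightarrow> A \<le> c * I / 2 + D / (2 * c)"
  shows "A \<le> sqrt D * sqrt I"
proof (rule ccontr)
  assume "\<not> A \<le> sqrt D * sqrt I"
  moreover have "0 \<le> sqrt D * sqrt I" using assms(1,2) by simp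
  ultimately have "0 < A" "sqrt (D * I) < sqrt (A\<^sup>2)" by (simp_all add: real_sqrt_mult)
  then have A: "0 < A" "D * I < A\<^sup>2" by (simp_all only: real_sqrt_less_iff)
  show False
  proof (cases "I = 0")
    case True
    have "A \<le> D / (2 * ((D + 1) / A))" using AM_GM[of "(D + 1) / A"] A True assms(1) by simp
    also have "\<dots> < A" using A assms(1) by (auto simp: field_simps intro!: add_nonneg_pos)
    finally show False by simp
  next
    case False
    have "A \<le> A / 2 + D * I / (2 * A)" using AM_GM[of "A / I"] A False assms(2) by simp
    then have "A\<^sup>2 \<le> D * I" using A by (simp add: field_simps power2_eq_square)
    then show False using A by simp
  qed
qed

lemma integral_abs_le_sqrt_integral_square:
  fixes \<phi> :: "real \<Rightarrow> real"
  assumes "(\<lambda>s. \<bar>\<phi> s\<bar>) integrable_on {a..b}" "(\<lambda>s. (\<phi> s)\<^sup>2) integrable_on {a..b}" "a \<le> b"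
  shows "integral {a..b} (\<lambda>s. \<bar>\<phi> s\<bar>) \<le> sqrt (b - a) * sqrt (integral {a..b} (\<lambda>s. (\<phi> s)\<^sup>2))"
proof (rule le_sqrt_mult_of_AM_GM_bounds)
  show "0 \<le> integral {a..b} (\<lambda>s. (\<phi> s)\<^sup>2)"
    using assms(2) by (intro integral_nonneg) auto
  fix c :: real assume "0 < c"
  have pointwise: "\<bar>\<phi> s\<bar> \<le> c * (\<phi> s)\<^sup>2 / 2 + 1 / (2 * c)" for s
    using sum_squares_bound[of "c * \<bar>\<phi> s\<bar>" 1] \<open>0 < c\<close>
    by (simp add: field_simps power2_eq_square)
  have "((\<lambda>s. c * (\<phi> s)\<^sup>2 / 2 + 1 / (2 * c)) has_integral
      (c * integral {a..b} (\<lambda>s. (\<phi> s)\<^sup>2) / 2 + (b - a) / (2 * c))) {a..b}"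
    using has_integral_add[OF has_integral_mult_right[OF integrable_integral[OF assms(2)], of "c / 2"]
        has_integral_const_real[of "1 / (2 * c)" a b]] assms(3)
    by simp
  from has_integral_le[OF integrable_integral[OF assms(1)] this] pointwise
  show "integral {a..b} (\<lambda>s. \<bar>\<phi> s\<bar>) \<le> c * integral {a..b} (\<lambda>s. (\<phi> s)\<^sup>2) / 2 + (b - a) / (2 * c)"
    by simp
qed (use assms(3) in simp)

lemma continuous_bootstrap:
  fixes g :: "real \<Rightarrow> real"
  assumes cont: "continuous_on {0..d} g" and "g 0 < a" "a < c"
    and step: "\<And>t. t \<in> {0..d} \<Longrightarrow> (\<And>s. s \<in> {0..t} \<Longrightarrow> g s < c) \<Longrightarrow> g t < a"
    and "t \<in> {0..d}"
  shows "g t < a"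
proof (rule ccontr)
  assume "\<not> g t < a"
  define T where "T = {0..d} \<inter> g -` {a..}"
  have "closed T"
    unfolding T_def using cont by (intro continuous_closed_preimage) auto
  moreover have "bounded T" unfolding T_def by (simp add: bounded_Int)
  ultimately have "compact T" by (simp add: compact_eq_bounded_closed)
  moreover have "t \<in> T" using \<open>\<not> g t < a\<close> \<open>t \<in> {0..d}\<close> by (simp add: T_def)
  ultimately obtain t1 where t1: "t1 \<in> T" "\<And>s. s \<in> T \<Longrightarrow> t1 \<le> s"
    using compact_attains_inf[of T] by auto
  then have t1_in: "t1 \<in> {0..d}" "a \<le> g t1" by (auto simp: T_def)
  have before: "g s < a" if "s \<in> {0..d}" "s < t1" for s
    using t1(2)[of s] that by (force simp: T_def)
  have "0 < t1" using t1_in \<open>g 0 < a\<close> by (cases "t1 = 0") auto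
  obtain \<eta> where \<eta>: "\<eta> > 0" "\<And>s. s \<in> {0..d} \<Longrightarrow> dist s t1 < \<eta> \<Longrightarrow> dist (g s) (g t1) < c - a"
    using cont t1_in(1) \<open>a < c\<close> unfolding continuous_on_iff by (metis diff_gt_0_iff_gt)
  define s0 where "s0 = max 0 (t1 - \<eta> / 2)"
  have s0: "s0 \<in> {0..d}" "s0 < t1" "dist s0 t1 < \<eta>"
    unfolding s0_def using \<open>0 < t1\<close> \<eta>(1) t1_in(1) by (auto simp: dist_real_def)
  have "g t1 < c"
    using \<eta>(2)[OF s0(1,3)] before[OF s0(1,2)] by (simp add: dist_real_def)
  then have "g s < c" if "s \<in> {0..t1}" for s
    using before[of s] that t1_in(1) \<open>a < c\<close> by (cases "s = t1") auto
  then show False using step[OF t1_in(1)] t1_in(2) by fastforce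
qed

section \<open>Coefficient bounds near the base point\<close>

locale bounded_coefficients =
  fixes \<sigma> b :: "real^2 \<Rightarrow> real^2" and x0 :: "real^2" and \<kappa> :: "real^2 \<Rightarrow> real" and N :: real
  assumes differentiable_\<sigma>: "\<And>z. \<sigma> differentiable (at z)"
    and differentiable_b: "\<And>z. b differentiable (at z)"
    and nfun_le: "\<And>z. z \<in> ball x0 1 \<Longrightarrow> nfun b \<sigma> z \<le> N"
    and \<sigma>_self_derivative: "\<And>z. z \<in> ball x0 1 \<Longrightarrow> dirD \<sigma> \<sigma> z = \<kappa> z *\<^sub>R \<sigma> z"
    and abs_\<kappa>_le: "\<And>z. z \<in> ball x0 1 \<Longrightarrow> \<bar>\<kappa> z\<bar> \<le> N"
begin

lemmas x0_in_ball = centre_in_ball[THEN iffD2, OF zero_less_one, of x0]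

lemma norms_le:
  assumes "z \<in> ball x0 1"
  shows "norm (\<sigma> z) \<le> N" "norm (b z) \<le> N"
    "norm (pd 1 \<sigma> z) + norm (pd 2 \<sigma> z) \<le> N" "norm (pd 1 b z) + norm (pd 2 b z) \<le> N"
  using norm_pd_le_nfun[of b z \<sigma>] nfun_le[OF assms]
    norm_ge_zero[of "b z"] norm_ge_zero[of "\<sigma> z"] norm_ge_zero[of "pd 1 b z"]
    norm_ge_zero[of "pd 2 b z"] norm_ge_zero[of "pd 1 \<sigma> z"] norm_ge_zero[of "pd 2 \<sigma> z"]
  by linarith+

lemma bounded_linear_D\<sigma>: "bounded_linear (frechet_derivative \<sigma> (at z))"
  using differentiable_\<sigma> frechet_derivative_works has_derivative_bounded_linear by blast

lemma norm_D\<sigma>_le: "z \<in> ball x0 1 \<Longrightarrow> norm (frechet_derivative \<sigma> (at z) w) \<le> N * norm w"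
  using norm_frechet_derivative_le_pd[OF differentiable_\<sigma>, of z w] norms_le(3)[of z]
  by (meson mult_right_mono norm_ge_zero order_trans)

lemma norm_Db_le: "z \<in> ball x0 1 \<Longrightarrow> norm (frechet_derivative b (at z) w) \<le> N * norm w"
  using norm_frechet_derivative_le_pd[OF differentiable_b, of z w] norms_le(4)[of z]
  by (meson mult_right_mono norm_ge_zero order_trans)

lemma \<sigma>_lipschitz: "y \<in> ball x0 1 \<Longrightarrow> z \<in> ball x0 1 \<Longrightarrow> norm (\<sigma> y - \<sigma> z) \<le> N * norm (y - z)"
  using lipschitz_on_convex[OF convex_ball differentiable_\<sigma> norm_D\<sigma>_le] by blast

lemma b_lipschitz: "y \<in> ball x0 1 \<Longrightarrow> z \<in> ball x0 1 \<Longrightarrow> norm (b y - b z) \<le> N * norm (y - z)"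
  using lipschitz_on_convex[OF convex_ball differentiable_b norm_Db_le] by blast

lemma D\<sigma>_\<sigma>: "z \<in> ball x0 1 \<Longrightarrow> frechet_derivative \<sigma> (at z) (\<sigma> z) = \<kappa> z *\<^sub>R \<sigma> z"
  using \<sigma>_self_derivative dirD_eq_frechet_derivative[OF differentiable_\<sigma>] by metis

end

section \<open>The one-step estimate\<close>

locale small_time_setting = bounded_coefficients +
  fixes \<Lambda> \<delta> :: real and \<phi> :: "real \<Rightarrow> real" and x :: "real \<Rightarrow> real^2"
  assumes \<Lambda>_pos: "0 < \<Lambda>" and \<Lambda>_le_1: "\<Lambda> \<le> 1" and N_ge_1: "1 \<le> N"
    and lam_x0_ge: "\<Lambda> \<le> lam \<sigma> b x0"
    and \<delta>_pos: "0 < \<delta>" and \<delta>_small: "\<delta> \<le> 1 / (1000 * (N / \<Lambda>) powr 4)"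
    and \<phi>_measurable: "set_borel_measurable lborel {0..\<delta>} \<phi>"
    and \<phi>_square_integrable: "(\<lambda>s. (\<phi> s)\<^sup>2) integrable_on {0..\<delta>}"
    and energy_small: "sqrt (integral {0..\<delta>} (\<lambda>s. (\<phi> s)\<^sup>2)) \<le> 1 / (1000 * (N / \<Lambda>) powr 4)"
    and solution: "\<And>t. t \<in> {0..\<delta>} \<Longrightarrow>
      ((\<lambda>s. \<phi> s *\<^sub>R \<sigma> (x s) + b (x s)) has_integral (x t - x0)) {0..t}"
begin

definition energy :: real where "energy = sqrt (integral {0..\<delta>} (\<lambda>s. (\<phi> s)\<^sup>2))"
definition rate :: real where "rate = max energy (sqrt \<delta>)"
definition radius :: real where "radius = 2 * N * sqrt \<delta> * rate"

lemma N_powers_le: "N \<le> N^4" "N^2 \<le> N^4" "N^3 \<le> N^4"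
  using power_increasing[of 1 4 N] power_increasing[of 2 4 N] power_increasing[of 3 4 N] N_ge_1
  by simp_all

lemma N_div_\<Lambda>_powr: "N^4 / \<Lambda> \<le> (N / \<Lambda>) powr 4" "1 \<le> (N / \<Lambda>) powr 4"
proof -
  have "(N / \<Lambda>) powr 4 = N^4 / \<Lambda>^4"
    using \<Lambda>_pos N_ge_1 by (simp add: powr_realpow power_divide)
  moreover have "\<Lambda>^4 \<le> \<Lambda>" using \<Lambda>_pos \<Lambda>_le_1 power_decreasing[of 1 4 \<Lambda>] by simp
  moreover have "\<Lambda> \<le> N" using \<Lambda>_le_1 N_ge_1 by simp
  ultimately show "N^4 / \<Lambda> \<le> (N / \<Lambda>) powr 4" "1 \<le> (N / \<Lambda>) powr 4"
    using \<Lambda>_pos N_ge_1 by (auto intro!: divide_left_mono power_mono)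
qed

lemma \<delta>_N4_le: "\<delta> * N^4 \<le> \<Lambda> / 1000"
proof -
  have "\<delta> * N^4 \<le> N^4 / (1000 * (N / \<Lambda>) powr 4)"
    using mult_right_mono[OF \<delta>_small, of "N^4"] by simp
  also have "\<dots> \<le> N^4 / (1000 * (N^4 / \<Lambda>))"
    using N_div_\<Lambda>_powr \<Lambda>_pos N_ge_1 by (intro divide_left_mono mult_left_mono) auto
  also have "\<dots> = \<Lambda> / 1000" using N_ge_1 by simp
  finally show ?thesis .
qed

lemma energy_le: "energy \<le> 1 / 1000"
proof -
  have "1 / (1000 * (N / \<Lambda>) powr 4) \<le> 1 / 1000"
    using N_div_\<Lambda>_powr(2) by (intro divide_left_mono) auto
  then show ?thesis using energy_small unfolding energy_def by linarith
qed

lemma sqrt_\<delta>_N_le: "sqrt \<delta> * N \<le> 1 / 30"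
proof -
  have "(sqrt \<delta> * N)\<^sup>2 = \<delta> * N^2" using \<delta>_pos by (simp add: power_mult_distrib)
  also have "\<dots> \<le> \<delta> * N^4" using N_powers_le \<delta>_pos by simp
  also have "\<dots> \<le> 1 / 1000" using \<delta>_N4_le \<Lambda>_le_1 by simp
  also have "\<dots> \<le> (1 / 30)\<^sup>2" by (simp add: power2_eq_square)
  finally show ?thesis by (rule power2_le_imp_le) simp
qed

lemma sqrt_\<delta>_le_1: "sqrt \<delta> \<le> 1"
proof -
  have "\<delta> \<le> \<delta> * N^4" using N_ge_1 \<delta>_pos by simp
  then show ?thesis using \<delta>_N4_le \<Lambda>_le_1 by simp
qed

lemma rate_pos: "0 < rate" and rate_le_1: "rate \<le> 1"
  using \<delta>_pos energy_le sqrt_\<delta>_le_1 by (auto simp: rate_def less_max_iff_disj)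

lemma \<delta>_le_rate: "\<delta> \<le> sqrt \<delta> * rate"
  using \<delta>_pos mult_left_mono[of "sqrt \<delta>" rate "sqrt \<delta>"] by (simp add: rate_def)

lemma radius_nonneg: "0 \<le> radius"
  using rate_pos \<delta>_pos N_ge_1 by (simp add: radius_def)

lemma radius_le: "radius \<le> 1 / 15"
proof -
  have "radius = 2 * (sqrt \<delta> * N) * rate" by (simp add: radius_def algebra_simps)
  also have "\<dots> \<le> 2 * (1 / 30) * 1"
    using sqrt_\<delta>_N_le rate_pos rate_le_1 N_ge_1 \<delta>_pos by (intro mult_mono) auto
  finally show ?thesis by simp
qed

lemma radius_mult_le: "radius * \<delta> \<le> sqrt \<delta> * rate" "radius * (sqrt \<delta> * rate) \<le> 2 * N * \<delta>"
proof -
  show "radius * \<delta> \<le> sqrt \<delta> * rate"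
    using radius_le \<delta>_pos \<delta>_le_rate mult_right_mono[of radius 1 \<delta>] by linarith
  have "radius * (sqrt \<delta> * rate) = 2 * N * \<delta> * rate\<^sup>2"
    using \<delta>_pos by (simp add: radius_def power2_eq_square algebra_simps)
  also have "\<dots> \<le> 2 * N * \<delta>"
    using rate_pos rate_le_1 \<delta>_pos N_ge_1 by (simp add: power_le_one mult_left_le)
  finally show "radius * (sqrt \<delta> * rate) \<le> 2 * N * \<delta>" .
qed

definition velocity :: "real \<Rightarrow> real^2" where "velocity s = \<phi> s *\<^sub>R \<sigma> (x s) + b (x s)"

lemma velocity_has_integral: "t \<in> {0..\<delta>} \<Longrightarrow> (velocity has_integral (x t - x0)) {0..t}"
  unfolding velocity_def[abs_def] by (rule solution)

lemma abs_\<phi>_integrable: "t \<in> {0..\<delta>} \<Longrightarrow> (\<lambda>s. \<bar>\<phi> s\<bar>) integrable_on {0..t}"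
  using square_integrable_imp_absolutely_integrable[OF \<phi>_measurable \<phi>_square_integrable]
  by (auto simp: absolutely_integrable_on_def intro: integrable_on_subinterval)

lemma integral_abs_\<phi>_le: "t \<in> {0..\<delta>} \<Longrightarrow> integral {0..t} (\<lambda>s. \<bar>\<phi> s\<bar>) \<le> sqrt \<delta> * rate"
proof -
  assume "t \<in> {0..\<delta>}"
  then have "integral {0..t} (\<lambda>s. \<bar>\<phi> s\<bar>) \<le> integral {0..\<delta>} (\<lambda>s. \<bar>\<phi> s\<bar>)"
    using abs_\<phi>_integrable \<delta>_pos by (intro integral_subset_le) auto
  also have "\<dots> \<le> sqrt \<delta> * energy"
    using integral_abs_le_sqrt_integral_square[OF abs_\<phi>_integrable \<phi>_square_integrable] \<delta>_pos
    by (simp add: energy_def)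
  also have "\<dots> \<le> sqrt \<delta> * rate"
    using \<delta>_pos by (intro mult_left_mono) (auto simp: rate_def)
  finally show ?thesis .
qed

lemma x_0: "x 0 = x0"
proof -
  have "(velocity has_integral (x 0 - x0)) {0}"
    using velocity_has_integral[of 0] \<delta>_pos by simp
  then show ?thesis
    using has_integral_unique[OF _ has_integral_refl(2)] by fastforce
qed

lemma continuous_on_x: "continuous_on {0..\<delta>} x"
proof -
  have "continuous_on {0..\<delta>} (\<lambda>t. x0 + integral {0..t} velocity)"
    using velocity_has_integral[of \<delta>] \<delta>_pos
    by (intro continuous_intros indefinite_integral_continuous_1) auto
  moreover have "x0 + integral {0..t} velocity = x t" if "t \<in> {0..\<delta>}" for t
    using integral_unique[OF velocity_has_integral[OF that]] by simp
  ultimately show ?thesis using continuous_on_eq by blast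
qed

lemma norm_x_le_radius_while_in_ball:
  assumes t: "t \<in> {0..\<delta>}" and in_ball: "\<And>s. s \<in> {0..t} \<Longrightarrow> x s \<in> ball x0 1"
  shows "norm (x t - x0) \<le> radius"
proof -
  have "norm (x t - x0) \<le> N * (sqrt \<delta> * rate) + N * (t - 0)"
  proof (rule norm_linear_integral_le[OF velocity_has_integral[OF t] bounded_linear_ident])
    fix s assume "s \<in> {0..t}"
    then have "x s \<in> ball x0 1" by (rule in_ball)
    have "norm (velocity s) \<le> \<bar>\<phi> s\<bar> * norm (\<sigma> (x s)) + norm (b (x s))"
      unfolding velocity_def using norm_triangle_ineq[of "\<phi> s *\<^sub>R \<sigma> (x s)" "b (x s)"] by simp
    also have "\<dots> \<le> \<bar>\<phi> s\<bar> * N + N"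
      using norms_le[OF \<open>x s \<in> ball x0 1\<close>] by (intro add_mono mult_left_mono) auto
    finally show "norm (velocity s) \<le> N * \<bar>\<phi> s\<bar> + N"
      by (simp add: mult.commute)
  qed (use t abs_\<phi>_integrable integral_abs_\<phi>_le N_ge_1 in auto)
  also have "\<dots> \<le> N * (sqrt \<delta> * rate) + N * (sqrt \<delta> * rate)"
    using t \<delta>_le_rate N_ge_1 by (intro add_mono mult_left_mono) auto
  finally show ?thesis by (simp add: radius_def)
qed

lemma x_in_ball: "t \<in> {0..\<delta>} \<Longrightarrow> x t \<in> ball x0 1"
proof -
  assume t: "t \<in> {0..\<delta>}"
  have "norm (x t - x0) < 1 / 2"
  proof (rule continuous_bootstrap[where g = "\<lambda>t. norm (x t - x0)" and c = 1])
    show "continuous_on {0..\<delta>} (\<lambda>t. norm (x t - x0))"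
      using continuous_on_x by (intro continuous_intros)
    show "norm (x t - x0) < 1 / 2"
      if "t \<in> {0..\<delta>}" and "\<And>s. s \<in> {0..t} \<Longrightarrow> norm (x s - x0) < 1" for t
      using norm_x_le_radius_while_in_ball[OF that(1)] that(2) radius_le
      by (force simp: dist_norm norm_minus_commute)
  qed (use t x_0 in auto)
  then have "norm (x0 - x t) < 1" by (simp add: norm_minus_commute)
  then show ?thesis by (simp add: dist_norm)
qed

lemma x_near_x0: "t \<in> {0..\<delta>} \<Longrightarrow> norm (x t - x0) \<le> radius"
  using norm_x_le_radius_while_in_ball x_in_ball by auto

lemma in_ball_if_near_x0: "norm (z - x0) \<le> radius \<Longrightarrow> z \<in> ball x0 1"
  using radius_le by (simp add: dist_norm norm_minus_commute)

lemma det2_D\<sigma>_velocity_le: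
  assumes \<xi>: "norm (\<xi> - x0) \<le> radius" and s: "s \<in> {0..\<delta>}"
  shows "\<bar>det2 (\<sigma> x0) (frechet_derivative \<sigma> (at \<xi>) (velocity s))\<bar> \<le> 3 * N^3 * radius * \<bar>\<phi> s\<bar> + N^3"
proof -
  define D where "D = frechet_derivative \<sigma> (at \<xi>)"
  interpret D: bounded_linear D
    unfolding D_def by (rule bounded_linear_D\<sigma>)
  have \<xi>_in: "\<xi> \<in> ball x0 1" and xs_in: "x s \<in> ball x0 1"
    using in_ball_if_near_x0[OF \<xi>] x_in_ball[OF s] .
  have "norm (x s - \<xi>) \<le> norm (x s - x0) + norm (\<xi> - x0)"
    using norm_triangle_ineq4[of "x s - x0" "\<xi> - x0"] by simp
  then have dist_xs_\<xi>: "norm (x s - \<xi>) \<le> 2 * radius"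
    using x_near_x0[OF s] \<xi> by linarith
  have \<sigma>0: "norm (\<sigma> x0) \<le> N" using norms_le(1)[OF x0_in_ball] .
  have "D (velocity s) = \<phi> s *\<^sub>R (\<kappa> \<xi> *\<^sub>R \<sigma> \<xi> + D (\<sigma> (x s) - \<sigma> \<xi>)) + D (b (x s))"
    using D\<sigma>_\<sigma>[OF \<xi>_in] by (simp add: velocity_def D_def[symmetric] D.add D.scaleR D.diff)
  then have split: "det2 (\<sigma> x0) (D (velocity s))
      = \<phi> s * (\<kappa> \<xi> * det2 (\<sigma> x0) (\<sigma> \<xi> - \<sigma> x0) + det2 (\<sigma> x0) (D (\<sigma> (x s) - \<sigma> \<xi>)))
        + det2 (\<sigma> x0) (D (b (x s)))"
    by (simp add: det2_simps)
  \<comment> \<open>Because \<open>\<sigma>\<close> is an eigenvector of its own derivative, the first two terms are of order \<open>radius\<close>.\<close>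
  have "\<bar>det2 (\<sigma> x0) (\<sigma> \<xi> - \<sigma> x0)\<bar> \<le> norm (\<sigma> x0) * norm (\<sigma> \<xi> - \<sigma> x0)"
    by (rule abs_det2_le)
  also have "\<dots> \<le> N * (N * norm (\<xi> - x0))"
    using \<sigma>0 \<sigma>_lipschitz[OF \<xi>_in x0_in_ball] N_ge_1 by (intro mult_mono) auto
  also have "\<dots> \<le> N * (N * radius)"
    using \<xi> N_ge_1 by (intro mult_left_mono) auto
  finally have "\<bar>\<kappa> \<xi>\<bar> * \<bar>det2 (\<sigma> x0) (\<sigma> \<xi> - \<sigma> x0)\<bar> \<le> N * (N * (N * radius))"
    using abs_\<kappa>_le[OF \<xi>_in] N_ge_1 by (intro mult_mono) auto
  moreover have "\<bar>det2 (\<sigma> x0) (D (\<sigma> (x s) - \<sigma> \<xi>))\<bar> \<le> N * (N * (N * (2 * radius)))"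
  proof -
    have "\<bar>det2 (\<sigma> x0) (D (\<sigma> (x s) - \<sigma> \<xi>))\<bar> \<le> norm (\<sigma> x0) * norm (D (\<sigma> (x s) - \<sigma> \<xi>))"
      by (rule abs_det2_le)
    also have "\<dots> \<le> N * (N * norm (\<sigma> (x s) - \<sigma> \<xi>))"
      using \<sigma>0 norm_D\<sigma>_le[OF \<xi>_in] N_ge_1 unfolding D_def by (intro mult_mono) auto
    also have "\<dots> \<le> N * (N * (N * norm (x s - \<xi>)))"
      using \<sigma>_lipschitz[OF xs_in \<xi>_in] N_ge_1 by (intro mult_left_mono) auto
    also have "\<dots> \<le> N * (N * (N * (2 * radius)))"
      using dist_xs_\<xi> N_ge_1 by (intro mult_left_mono) auto
    finally show ?thesis .
  qed
  moreover have "\<bar>det2 (\<sigma> x0) (D (b (x s)))\<bar> \<le> N * (N * N)"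
  proof -
    have "\<bar>det2 (\<sigma> x0) (D (b (x s)))\<bar> \<le> norm (\<sigma> x0) * norm (D (b (x s)))"
      by (rule abs_det2_le)
    also have "\<dots> \<le> N * (N * norm (b (x s)))"
      using \<sigma>0 norm_D\<sigma>_le[OF \<xi>_in] N_ge_1 unfolding D_def by (intro mult_mono) auto
    also have "\<dots> \<le> N * (N * N)"
      using norms_le(2)[OF xs_in] N_ge_1 by (intro mult_left_mono) auto
    finally show ?thesis .
  qed
  ultimately have "\<bar>det2 (\<sigma> x0) (D (velocity s))\<bar>
      \<le> \<bar>\<phi> s\<bar> * (N * (N * (N * radius)) + N * (N * (N * (2 * radius)))) + N * (N * N)"
    unfolding split abs_mult[symmetric]
    by (intro order.trans[OF abs_mult_add_le] add_mono mult_left_mono) auto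
  then show ?thesis
    by (simp add: D_def power3_eq_cube algebra_simps)
qed

lemma det2_\<sigma>_x_le: "t \<in> {0..\<delta>} \<Longrightarrow> \<bar>det2 (\<sigma> x0) (\<sigma> (x t))\<bar> \<le> 7 * N^4 * \<delta>"
proof -
  assume t: "t \<in> {0..\<delta>}"
  obtain \<theta> where \<theta>: "\<theta> \<in> {0<..<1}" and mvt:
    "det2 (\<sigma> x0) (\<sigma> (x0 + (x t - x0))) - det2 (\<sigma> x0) (\<sigma> x0)
       = det2 (\<sigma> x0) (frechet_derivative \<sigma> (at (x0 + \<theta> *\<^sub>R (x t - x0))) (x t - x0))"
    using mean_value_linear_functional[OF bounded_linear_det2 differentiable_\<sigma>] by blast
  define \<xi> where "\<xi> = x0 + \<theta> *\<^sub>R (x t - x0)"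
  define L where "L = (\<lambda>v. det2 (\<sigma> x0) (frechet_derivative \<sigma> (at \<xi>) v))"
  have L: "bounded_linear L"
    unfolding L_def by (rule bounded_linear_compose[OF bounded_linear_det2 bounded_linear_D\<sigma>])
  have "norm (\<xi> - x0) = \<theta> * norm (x t - x0)" using \<theta> by (simp add: \<xi>_def)
  also have "\<dots> \<le> radius"
    using \<theta> x_near_x0[OF t] mult_left_le_one_le[of "norm (x t - x0)" \<theta>] by auto
  finally have \<xi>_near: "norm (\<xi> - x0) \<le> radius" .
  have "\<bar>det2 (\<sigma> x0) (\<sigma> (x t))\<bar> = norm (L (x t - x0))"
    using mvt by (simp add: L_def \<xi>_def det2_simps)
  also have "\<dots> \<le> 3 * N^3 * radius * (sqrt \<delta> * rate) + N^3 * (t - 0)"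
    using det2_D\<sigma>_velocity_le[OF \<xi>_near] t N_ge_1 radius_nonneg
    by (intro norm_linear_integral_le[OF velocity_has_integral[OF t] L _ _ _ abs_\<phi>_integrable[OF t]
          integral_abs_\<phi>_le[OF t]]) (auto simp: L_def)
  also have "\<dots> \<le> 3 * N^3 * (2 * N * \<delta>) + N^4 * \<delta>"
  proof (rule add_mono)
    show "3 * N^3 * radius * (sqrt \<delta> * rate) \<le> 3 * N^3 * (2 * N * \<delta>)"
      using mult_left_mono[OF radius_mult_le(2), of "3 * N^3"] N_ge_1 by (simp add: mult.assoc)
    show "N^3 * (t - 0) \<le> N^4 * \<delta>"
      using t N_ge_1 N_powers_le(3) \<delta>_pos by (simp add: mult_mono)
  qed
  also have "\<dots> = 7 * N^4 * \<delta>"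
    by (simp add: power_eq_if eval_nat_numeral algebra_simps)
  finally show ?thesis .
qed

definition \<nu> :: "real^2" where "\<nu> = \<sigma> x0 + \<delta> *\<^sub>R dirD \<sigma> b x0"

lemma norm_dirD_\<sigma>_b_le: "norm (dirD \<sigma> b x0) \<le> N^2"
proof -
  have "norm (dirD \<sigma> b x0) \<le> N * norm (b x0)"
    using norm_D\<sigma>_le[OF x0_in_ball] by (simp add: dirD_eq_frechet_derivative[OF differentiable_\<sigma>])
  also have "\<dots> \<le> N * N"
    using norms_le(2)[OF x0_in_ball] N_ge_1 by (intro mult_left_mono) auto
  finally show ?thesis by (simp add: power2_eq_square)
qed

lemma norm_bracket_le: "norm (bracket b \<sigma> x0) \<le> 2 * N^2"
proof -
  have "norm (bracket b \<sigma> x0) \<le> norm (dirD b \<sigma> x0) + norm (dirD \<sigma> b x0)"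
    unfolding bracket_def by (rule norm_triangle_ineq4)
  also have "norm (dirD b \<sigma> x0) \<le> N * norm (\<sigma> x0)"
    using norm_Db_le[OF x0_in_ball] by (simp add: dirD_eq_frechet_derivative[OF differentiable_b])
  also have "\<dots> \<le> N^2"
    using norms_le(1)[OF x0_in_ball] N_ge_1 by (simp add: power2_eq_square mult_left_mono)
  finally show ?thesis using norm_dirD_\<sigma>_b_le by simp
qed

lemma \<delta>_N2_le: "\<delta> * N^2 \<le> 1 / 1000"
proof -
  have "\<delta> * N^2 \<le> \<delta> * N^4" using N_powers_le(2) \<delta>_pos by (simp add: mult_left_mono)
  then show ?thesis using \<delta>_N4_le \<Lambda>_le_1 by simp
qed

lemma norm_\<nu>_le: "norm \<nu> \<le> 2 * N"
proof -
  have "norm \<nu> \<le> norm (\<sigma> x0) + \<delta> * norm (dirD \<sigma> b x0)"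
    unfolding \<nu>_def using norm_triangle_ineq[of "\<sigma> x0" "\<delta> *\<^sub>R dirD \<sigma> b x0"] \<delta>_pos by simp
  also have "\<dots> \<le> N + \<delta> * N^2"
    using norms_le(1)[OF x0_in_ball] norm_dirD_\<sigma>_b_le \<delta>_pos by (intro add_mono mult_left_mono) auto
  finally show ?thesis using \<delta>_N2_le N_ge_1 by linarith
qed

lemma abs_det2_\<nu>_bracket_ge: "\<Lambda> / 2 \<le> \<bar>det2 \<nu> (bracket b \<sigma> x0)\<bar>"
proof -
  have "\<Lambda> \<le> \<bar>det2 (\<sigma> x0) (bracket b \<sigma> x0)\<bar>"
    using lambda_min_le_abs_det[OF \<Lambda>_pos, of "Amat \<sigma> b x0"] lam_x0_ge
    by (simp add: lam_def Amat_def det_cols)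
  moreover have "\<bar>det2 (dirD \<sigma> b x0) (bracket b \<sigma> x0)\<bar> \<le> N^2 * (2 * N^2)"
    using abs_det2_le norm_dirD_\<sigma>_b_le norm_bracket_le
    by (rule order.trans[OF _ mult_mono]) auto
  then have "\<bar>det2 (dirD \<sigma> b x0) (bracket b \<sigma> x0)\<bar> \<le> 2 * N^4"
    by (simp add: power4_eq_xxxx power2_eq_square)
  then have "\<bar>\<delta> * det2 (dirD \<sigma> b x0) (bracket b \<sigma> x0)\<bar> \<le> \<delta> * (2 * N^4)"
    using \<delta>_pos by (simp add: abs_mult mult_left_mono)
  moreover have "det2 \<nu> (bracket b \<sigma> x0)
      = det2 (\<sigma> x0) (bracket b \<sigma> x0) + \<delta> * det2 (dirD \<sigma> b x0) (bracket b \<sigma> x0)"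
    by (simp add: \<nu>_def det2_simps)
  ultimately show ?thesis
    using \<delta>_N4_le \<Lambda>_pos by linarith
qed

lemma Abar_eq_cols: "Abar \<sigma> b \<delta> x0 = cols (sqrt \<delta> *\<^sub>R \<nu>) ((\<delta> * sqrt \<delta>) *\<^sub>R bracket b \<sigma> x0)"
proof -
  have "\<delta> powr (3/2) = \<delta> * sqrt \<delta>"
    using \<delta>_pos powr_add[of \<delta> 1 "1/2"] by (simp add: powr_half_sqrt)
  then show ?thesis by (simp add: Abar_def \<nu>_def)
qed

lemma det2_Abar_columns:
  "det2 (sqrt \<delta> *\<^sub>R \<nu>) ((\<delta> * sqrt \<delta>) *\<^sub>R bracket b \<sigma> x0) = \<delta>^2 * det2 \<nu> (bracket b \<sigma> x0)"
  using \<delta>_pos by (simp add: det2_simps power2_eq_square)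

lemma invertible_Abar: "invertible (Abar \<sigma> b \<delta> x0)"
  using abs_det2_\<nu>_bracket_ge \<Lambda>_pos \<delta>_pos
  by (auto simp: Abar_eq_cols det2_Abar_columns intro!: invertible_cols)

lemma Anorm_Abar_le:
  "Anorm w (Abar \<sigma> b \<delta> x0)
    \<le> (\<bar>det2 w (bracket b \<sigma> x0)\<bar> / sqrt \<delta> + \<bar>det2 \<nu> w\<bar> / (\<delta> * sqrt \<delta>)) / \<bar>det2 \<nu> (bracket b \<sigma> x0)\<bar>"
proof -
  have "det2 \<nu> (bracket b \<sigma> x0) \<noteq> 0" using abs_det2_\<nu>_bracket_ge \<Lambda>_pos by auto
  then have "Anorm w (Abar \<sigma> b \<delta> x0)
      \<le> (\<bar>det2 w ((\<delta> * sqrt \<delta>) *\<^sub>R bracket b \<sigma> x0)\<bar> + \<bar>det2 (sqrt \<delta> *\<^sub>R \<nu>) w\<bar>)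
         / \<bar>\<delta>^2 * det2 \<nu> (bracket b \<sigma> x0)\<bar>"
    using Anorm_cols_le[of "sqrt \<delta> *\<^sub>R \<nu>" "(\<delta> * sqrt \<delta>) *\<^sub>R bracket b \<sigma> x0" w] \<delta>_pos
    unfolding Abar_eq_cols det2_Abar_columns by simp
  also have "\<dots> = (\<bar>det2 w (bracket b \<sigma> x0)\<bar> / sqrt \<delta> + \<bar>det2 \<nu> w\<bar> / (\<delta> * sqrt \<delta>))
                    / \<bar>det2 \<nu> (bracket b \<sigma> x0)\<bar>"
  proof -
    have "(\<bar>det2 w ((r\<^sup>2 * r) *\<^sub>R v)\<bar> + \<bar>det2 (r *\<^sub>R u) w\<bar>) / \<bar>(r\<^sup>2)\<^sup>2 * det2 u v\<bar>
        = (\<bar>det2 w v\<bar> / r + \<bar>det2 u w\<bar> / (r\<^sup>2 * r)) / \<bar>det2 u v\<bar>"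
      if "0 < r" "det2 u v \<noteq> 0" for r and u v :: "real^2"
      using that by (simp add: det2_simps abs_mult field_simps power2_eq_square)
    from this[of "sqrt \<delta>"] show ?thesis
      using \<delta>_pos abs_det2_\<nu>_bracket_ge \<Lambda>_pos by simp
  qed
  finally show ?thesis .
qed

definition remainder :: "real^2" where "remainder = x \<delta> - (x0 + \<delta> *\<^sub>R b x0)"

lemma remainder_has_integral: "((\<lambda>s. velocity s - b x0) has_integral remainder) {0..\<delta>}"
  using has_integral_diff[OF velocity_has_integral has_integral_const_real[of "b x0" 0 \<delta>]] \<delta>_pos
  by (simp add: remainder_def algebra_simps)

lemma norm_b_x_diff_le: "s \<in> {0..\<delta>} \<Longrightarrow> norm (b (x s) - b x0) \<le> N * radius"
  using b_lipschitz[OF x_in_ball x0_in_ball] x_near_x0 N_ge_1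
  by (meson mult_left_mono order_trans zero_le_one)

lemma norm_remainder_le: "norm remainder \<le> 2 * N * (sqrt \<delta> * rate)"
proof -
  have "norm remainder \<le> N * (sqrt \<delta> * rate) + N * radius * (\<delta> - 0)"
  proof (rule norm_linear_integral_le[OF remainder_has_integral bounded_linear_ident])
    fix s assume s: "s \<in> {0..\<delta>}"
    have "norm (velocity s - b x0) \<le> \<bar>\<phi> s\<bar> * norm (\<sigma> (x s)) + norm (b (x s) - b x0)"
      unfolding velocity_def using norm_triangle_ineq[of "\<phi> s *\<^sub>R \<sigma> (x s)" "b (x s) - b x0"]
      by (simp add: add_diff_eq)
    also have "\<dots> \<le> \<bar>\<phi> s\<bar> * N + N * radius"
      using norms_le(1)[OF x_in_ball[OF s]] norm_b_x_diff_le[OF s] by (intro add_mono mult_left_mono) auto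
    finally show "norm (velocity s - b x0) \<le> N * \<bar>\<phi> s\<bar> + N * radius"
      by (simp add: mult.commute)
  qed (use \<delta>_pos abs_\<phi>_integrable integral_abs_\<phi>_le N_ge_1 in auto)
  also have "\<dots> \<le> N * (sqrt \<delta> * rate) + N * (sqrt \<delta> * rate)"
    using mult_left_mono[OF radius_mult_le(1), of N] N_ge_1 by (simp add: mult.assoc)
  finally show ?thesis by simp
qed

lemma abs_det2_\<nu>_remainder_le: "\<bar>det2 \<nu> remainder\<bar> \<le> 12 * N^4 * \<delta> * (sqrt \<delta> * rate)"
proof -
  have "\<bar>det2 \<nu> remainder\<bar> \<le> 8 * N^4 * \<delta> * (sqrt \<delta> * rate) + 2 * N * (N * radius) * (\<delta> - 0)"
  proof (rule norm_linear_integral_le[OF remainder_has_integral bounded_linear_det2, simplified real_norm_def])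
    fix s assume s: "s \<in> {0..\<delta>}"
    have split: "det2 \<nu> (velocity s - b x0)
        = \<phi> s * (det2 (\<sigma> x0) (\<sigma> (x s)) + \<delta> * det2 (dirD \<sigma> b x0) (\<sigma> (x s))) + det2 \<nu> (b (x s) - b x0)"
      by (simp add: velocity_def \<nu>_def det2_simps algebra_simps)
    have drift_term: "\<bar>\<delta> * det2 (dirD \<sigma> b x0) (\<sigma> (x s))\<bar> \<le> N^4 * \<delta>"
    proof -
      have "\<bar>det2 (dirD \<sigma> b x0) (\<sigma> (x s))\<bar> \<le> N^2 * N"
        using abs_det2_le norm_dirD_\<sigma>_b_le norms_le(1)[OF x_in_ball[OF s]]
        by (rule order.trans[OF _ mult_mono]) auto
      also have "\<dots> \<le> N^4" using N_powers_le(3) by (simp add: power3_eq_cube power2_eq_square)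
      finally show ?thesis using \<delta>_pos by (simp add: abs_mult mult_left_mono mult.commute)
    qed
    have b_term: "\<bar>det2 \<nu> (b (x s) - b x0)\<bar> \<le> 2 * N * (N * radius)"
      using abs_det2_le norm_\<nu>_le norm_b_x_diff_le[OF s]
      by (rule order.trans[OF _ mult_mono]) (use N_ge_1 in auto)
    have "\<bar>det2 \<nu> (velocity s - b x0)\<bar> \<le> \<bar>\<phi> s\<bar> * (\<bar>det2 (\<sigma> x0) (\<sigma> (x s))\<bar>
        + \<bar>\<delta> * det2 (dirD \<sigma> b x0) (\<sigma> (x s))\<bar>) + \<bar>det2 \<nu> (b (x s) - b x0)\<bar>"
      unfolding split by (rule abs_mult_add_le)
    also have "\<dots> \<le> \<bar>\<phi> s\<bar> * (7 * N^4 * \<delta> + N^4 * \<delta>) + 2 * N * (N * radius)"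
      using det2_\<sigma>_x_le[OF s] drift_term b_term by (intro add_mono mult_left_mono) auto
    finally show "\<bar>det2 \<nu> (velocity s - b x0)\<bar> \<le> 8 * N^4 * \<delta> * \<bar>\<phi> s\<bar> + 2 * N * (N * radius)"
      by (simp add: algebra_simps)
  qed (use \<delta>_pos abs_\<phi>_integrable integral_abs_\<phi>_le N_ge_1 in auto)
  also have "2 * N * (N * radius) * (\<delta> - 0) = 4 * N^3 * \<delta> * (sqrt \<delta> * rate)"
    by (simp add: radius_def power2_eq_square power3_eq_cube algebra_simps)
  also have "\<dots> \<le> 4 * N^4 * \<delta> * (sqrt \<delta> * rate)"
    using N_powers_le(3) \<delta>_pos rate_pos by (intro mult_right_mono) auto
  finally show ?thesis by (simp add: algebra_simps)
qed

theorem Anorm_remainder_le: "Anorm remainder (Abar \<sigma> b \<delta> x0) \<le> 1000 * (N / \<Lambda>) powr 4 * rate"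
proof -
  have "\<bar>det2 remainder (bracket b \<sigma> x0)\<bar> \<le> (2 * N * (sqrt \<delta> * rate)) * (2 * N^2)"
    using abs_det2_le norm_remainder_le norm_bracket_le
    by (rule order.trans[OF _ mult_mono]) (use N_ge_1 rate_pos \<delta>_pos in auto)
  then have "\<bar>det2 remainder (bracket b \<sigma> x0)\<bar> / sqrt \<delta> \<le> 4 * N^3 * rate"
    using \<delta>_pos by (simp add: divide_le_eq power2_eq_square power3_eq_cube algebra_simps)
  moreover have "\<bar>det2 \<nu> remainder\<bar> / (\<delta> * sqrt \<delta>) \<le> 12 * N^4 * rate"
    using abs_det2_\<nu>_remainder_le \<delta>_pos by (simp add: divide_le_eq algebra_simps)
  ultimately have "Anorm remainder (Abar \<sigma> b \<delta> x0) \<le> (4 * N^3 * rate + 12 * N^4 * rate) / (\<Lambda> / 2)"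
    using Anorm_Abar_le[of remainder] abs_det2_\<nu>_bracket_ge \<Lambda>_pos N_ge_1 rate_pos
    by (elim order.trans[OF _ frac_le] add_mono) auto
  also have "\<dots> \<le> 32 * (N^4 / \<Lambda>) * rate"
    using N_powers_le(3) rate_pos \<Lambda>_pos by (simp add: field_simps)
  also have "\<dots> \<le> 1000 * (N / \<Lambda>) powr 4 * rate"
    using N_div_\<Lambda>_powr rate_pos by (intro mult_right_mono) auto
  finally show ?thesis .
qed

end

theorem lemmaA5:
  shows "\<exists>K q :: real. K \<ge> 1 \<and> q \<ge> 1 \<and>
    (\<forall>(\<sigma> :: real^2 \<Rightarrow> real^2) (b :: real^2 \<Rightarrow> real^2) (x0 :: real^2) (\<Lambda> :: real) (N :: real)
        (\<kappa> :: real^2 \<Rightarrow> real).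
      Ck 3 \<sigma> \<and> Ck 3 b \<and> 0 < \<Lambda> \<and> \<Lambda> \<le> 1 \<and> N \<ge> 1 \<and>
      (\<forall>z. dist z x0 < 1 \<longrightarrow> lam \<sigma> b z \<ge> \<Lambda> \<and> nfun b \<sigma> z \<le> N) \<and>
      (\<forall>z. \<kappa> differentiable (at z)) \<and>
      (\<forall>z. dist z x0 < 1 \<longrightarrow> dirD \<sigma> \<sigma> z = \<kappa> z *\<^sub>R \<sigma> z \<and>
           \<bar>\<kappa> z\<bar> \<le> nfun b \<sigma> z \<and> norm (grad \<kappa> z) \<le> nfun b \<sigma> z)
      \<longrightarrow>
      (\<forall>(\<delta> :: real) (\<phi> :: real \<Rightarrow> real) (x :: real \<Rightarrow> real^2).
         0 < \<delta> \<and> \<delta> \<le> 1 / (K * (N / \<Lambda>) powr q) \<and>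
         set_borel_measurable lborel {0..\<delta>} \<phi> \<and>
         (\<lambda>s. (\<phi> s)\<^sup>2) integrable_on {0..\<delta>} \<and>
         sqrt (integral {0..\<delta>} (\<lambda>s. (\<phi> s)\<^sup>2)) \<le> 1 / (K * (N / \<Lambda>) powr q) \<and>
         (\<forall>t\<in>{0..\<delta>}. ((\<lambda>s. \<phi> s *\<^sub>R \<sigma> (x s) + b (x s)) has_integral (x t - x0)) {0..t})
         \<longrightarrow>
         invertible (Abar \<sigma> b \<delta> x0) \<and>
         Anorm (x \<delta> - (x0 + \<delta> *\<^sub>R b x0)) (Abar \<sigma> b \<delta> x0)
           \<le> K * (N / \<Lambda>) powr q * max (sqrt (integral {0..\<delta>} (\<lambda>s. (\<phi> s)\<^sup>2))) (sqrt \<delta>)))"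
proof (rule exI[of _ 1000], rule exI[of _ 4], intro conjI allI impI; (elim conjE)?)
  fix \<sigma> b :: "real^2 \<Rightarrow> real^2" and x0 :: "real^2" and \<Lambda> N :: real and \<kappa> :: "real^2 \<Rightarrow> real"
    and \<delta> :: real and \<phi> :: "real \<Rightarrow> real" and x :: "real \<Rightarrow> real^2"
  assume C3: "Ck 3 \<sigma>" "Ck 3 b" and \<Lambda>: "0 < \<Lambda>" "\<Lambda> \<le> 1" and N: "N \<ge> 1"
    and near_x0: "\<forall>z. dist z x0 < 1 \<longrightarrow> lam \<sigma> b z \<ge> \<Lambda> \<and> nfun b \<sigma> z \<le> N"
    and "\<forall>z. \<kappa> differentiable (at z)"
    and \<kappa>: "\<forall>z. dist z x0 < 1 \<longrightarrow> dirD \<sigma> \<sigma> z = \<kappa> z *\<^sub>R \<sigma> z \<and>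
           \<bar>\<kappa> z\<bar> \<le> nfun b \<sigma> z \<and> norm (grad \<kappa> z) \<le> nfun b \<sigma> z"
    and \<delta>: "0 < \<delta>" "\<delta> \<le> 1 / (1000 * (N / \<Lambda>) powr 4)"
    and \<phi>: "set_borel_measurable lborel {0..\<delta>} \<phi>" "(\<lambda>s. (\<phi> s)\<^sup>2) integrable_on {0..\<delta>}"
      "sqrt (integral {0..\<delta>} (\<lambda>s. (\<phi> s)\<^sup>2)) \<le> 1 / (1000 * (N / \<Lambda>) powr 4)"
    and solution: "\<forall>t\<in>{0..\<delta>}. ((\<lambda>s. \<phi> s *\<^sub>R \<sigma> (x s) + b (x s)) has_integral (x t - x0)) {0..t}"
  interpret small_time_setting \<sigma> b x0 \<kappa> N \<Lambda> \<delta> \<phi> x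
  proof unfold_locales
    show "\<sigma> differentiable (at z)" "b differentiable (at z)" for z
      using C3 by (simp_all add: Ck3_differentiable)
    show "nfun b \<sigma> z \<le> N" "dirD \<sigma> \<sigma> z = \<kappa> z *\<^sub>R \<sigma> z" "\<bar>\<kappa> z\<bar> \<le> N" if "z \<in> ball x0 1" for z
      using that near_x0 \<kappa> by (force simp: dist_commute)+
    show "\<Lambda> \<le> lam \<sigma> b x0" using near_x0 by simp
  qed (use \<Lambda> N \<delta> \<phi> solution in auto)
  show "invertible (Abar \<sigma> b \<delta> x0)"
    by (rule invertible_Abar)
  show "Anorm (x \<delta> - (x0 + \<delta> *\<^sub>R b x0)) (Abar \<sigma> b \<delta> x0)
      \<le> 1000 * (N / \<Lambda>) powr 4 * max (sqrt (integral {0..\<delta>} (\<lambda>s. (\<phi> s)\<^sup>2))) (sqrt \<delta>)"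
    using Anorm_remainder_le by (simp add: remainder_def rate_def energy_def)
qed simp_all

end
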